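(* Let $D\in\mathbb{N}$, let $G=(V,E)$ be a finite $D$-Ricci-flat graph, and let $\psi\in C^1((0,\infty))$ be concave with $C_\psi>0$. Then $G$ satisfies the $CD\psi(d,0)$ inequality with $d=D/C_\psi$.
   Context: A finite graph $G=(V,E)$: finite set $V$, irreflexive symmetric relation $E$; $v\sim w$ iff $(v,w)\in E$; $N(v):=\{v\}\cup\{w:w\sim v\}$. $G$ is $D$-Ricci-flat if for every $v\in V$: every $w\in N(v)$ has degree $D$ and there are maps $\eta_1,\dots,\eta_D:N(v)\to V$ with, for all $w\in N(v)$ and $i\neq j$: $\eta_i(w)\sim w$, $\eta_i(w)\neq\eta_j(w)$, and $\bigcup_k\{\eta_k(\eta_i(v))\}=\bigcup_k\{\eta_i(\eta_k(v))\}$. Laplacian $\Delta f(v)=\sum_{w\sim v}(f(w)-f(v))$. For positive $f$: $(\Delta^\psi f)(v):=\Delta\big[\psi\big(\tfrac{f}{f(v)}\big)\big](v)$; $(\Omega^\psi f)(v):=\Delta\Big[\psi'\big(\tfrac{f}{f(v)}\big)\cdot\tfrac{f}{f(v)}\cdot\big(\tfrac{\Delta f}{f}-\tfrac{(\Delta f)(v)}{f(v)}\big)\Big](v)$; $2\Gamma_2^\psi(f):=\Omega^\psi f+\frac{\Delta f\,\Delta^\psi f}{f}-\frac{\Delta(f\,\Delta^\psi f)}{f}$. $CD\psi(d,0)$: $\Gamma_2^\psi(f)\ge\frac1d(\Delta^\psi f)^2$ for all positive $f$. For $x,y>0$, $\widetilde{\psi}(x,y):=[\psi'(x)+\psi'(y)](1-xy)+x[\psi(y)-\psi(1/x)]+y[\psi(x)-\psi(1/y)]$,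 and $C_\psi:=\inf\frac{\widetilde{\psi}(x,y)}{(\psi(x)+\psi(y)-2\psi(1))^2}$, the infimum over all $x,y>0$ with $\psi(x)+\psi(y)\neq2\psi(1)$. *)

theory Defs
  imports "HOL-Analysis.Analysis"
begin

definition fin_graph :: "'a set \<Rightarrow> ('a \<Rightarrow> 'a \<Rightarrow> bool) \<Rightarrow> bool" where
  "fin_graph V E \<longleftrightarrow> finite V \<and> (\<forall>v w. E v w \<longrightarrow> v \<in> V \<and> w \<in> V)
     \<and> (\<forall>v w. E v w \<longrightarrow> E w v) \<and> (\<forall>v. \<not> E v v)"

definition nbhd :: "('a \<Rightarrow> 'a \<Rightarrow> bool) \<Rightarrow> 'a \<Rightarrow> 'a set" where
  "nbhd E v = {v} \<union> {w. E w v}"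

definition degree :: "('a \<Rightarrow> 'a \<Rightarrow> bool) \<Rightarrow> 'a \<Rightarrow> nat" where
  "degree E v = card {w. E v w}"

definition ricci_flat :: "nat \<Rightarrow> 'a set \<Rightarrow> ('a \<Rightarrow> 'a \<Rightarrow> bool) \<Rightarrow> bool" where
  "ricci_flat D V E \<longleftrightarrow> (\<forall>v\<in>V.
      (\<forall>w\<in>nbhd E v. degree E w = D) \<and>
      (\<exists>\<eta> :: nat \<Rightarrow> 'a \<Rightarrow> 'a.
         (\<forall>w\<in>nbhd E v. \<forall>i\<in>{1..D}. E (\<eta> i w) w \<and> (\<forall>j\<in>{1..D}. i \<noteq> j \<longrightarrow> \<eta> i w \<noteq> \<eta> j w)) \<and>
         (\<forall>i\<in>{1..D}. (\<Union>k\<in>{1..D}. {\<eta> k (\<eta> i v)}) = (\<Union>k\<in>{1..D}. {\<eta> i (\<eta> k v)}))))"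

definition laplacian :: "('a \<Rightarrow> 'a \<Rightarrow> bool) \<Rightarrow> ('a \<Rightarrow> real) \<Rightarrow> 'a \<Rightarrow> real" where
  "laplacian E f v = (\<Sum>w\<in>{w. E v w}. f w - f v)"

definition lap_psi :: "('a \<Rightarrow> 'a \<Rightarrow> bool) \<Rightarrow> (real \<Rightarrow> real) \<Rightarrow> ('a \<Rightarrow> real) \<Rightarrow> 'a \<Rightarrow> real" where
  "lap_psi E \<psi> f v = laplacian E (\<lambda>w. \<psi> (f w / f v)) v"

definition omega_psi :: "('a \<Rightarrow> 'a \<Rightarrow> bool) \<Rightarrow> (real \<Rightarrow> real) \<Rightarrow> ('a \<Rightarrow> real) \<Rightarrow> 'a \<Rightarrow> real" where
  "omega_psi E \<psi> f v = laplacian E (\<lambda>w. deriv \<psi> (f w / f v) * (f w / f v) *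
        (laplacian E f w / f w - laplacian E f v / f v)) v"

text \<open>\<open>Gamma2_psi\<close> is \<open>\<Gamma>\<^sub>2\<^sup>\<psi>\<close>, i.e. one half of \<open>2\<Gamma>\<^sub>2\<^sup>\<psi>\<close>.\<close>
definition Gamma2_psi :: "('a \<Rightarrow> 'a \<Rightarrow> bool) \<Rightarrow> (real \<Rightarrow> real) \<Rightarrow> ('a \<Rightarrow> real) \<Rightarrow> 'a \<Rightarrow> real" where
  "Gamma2_psi E \<psi> f v = (omega_psi E \<psi> f v
      + laplacian E f v * lap_psi E \<psi> f v / f v
      - laplacian E (\<lambda>w. f w * lap_psi E \<psi> f w) v / f v) / 2"

definition CD_psi :: "'a set \<Rightarrow> ('a \<Rightarrow> 'a \<Rightarrow> bool) \<Rightarrow> (real \<Rightarrow> real) \<Rightarrow> real \<Rightarrow> bool" where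
  "CD_psi V E \<psi> d \<longleftrightarrow> (\<forall>f :: 'a \<Rightarrow> real. (\<forall>v\<in>V. f v > 0) \<longrightarrow>
      (\<forall>v\<in>V. Gamma2_psi E \<psi> f v \<ge> (1 / d) * (lap_psi E \<psi> f v)\<^sup>2))"

definition psi_tilde :: "(real \<Rightarrow> real) \<Rightarrow> real \<Rightarrow> real \<Rightarrow> real" where
  "psi_tilde \<psi> x y = (deriv \<psi> x + deriv \<psi> y) * (1 - x * y)
      + x * (\<psi> y - \<psi> (1 / x)) + y * (\<psi> x - \<psi> (1 / y))"

text \<open>\<open>C_psi\<close> as an extended real infimum (may be \<open>-\<infinity>\<close>, or \<open>\<infinity>\<close> if the index set is empty).\<close>
definition C_psi :: "(real \<Rightarrow> real) \<Rightarrow> ereal" where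
  "C_psi \<psi> = (INF (x, y) \<in> {(x, y). x > 0 \<and> y > 0 \<and> \<psi> x + \<psi> y \<noteq> 2 * \<psi> 1}.
      ereal (psi_tilde \<psi> x y / (\<psi> x + \<psi> y - 2 * \<psi> 1)\<^sup>2))"

definition C1_pos :: "(real \<Rightarrow> real) \<Rightarrow> bool" where
  "C1_pos \<psi> \<longleftrightarrow> (\<forall>x>0. \<psi> differentiable (at x)) \<and> continuous_on {0<..} (deriv \<psi>)"

end

theory Submission
  imports Defs
begin

(*
  Fix a vertex v, its neighbours y k = eta k v and the second neighbours z i k = eta i (y k),
  and put x k = f (y k) / f v, w i k = f (z i k) / f v.  The columns of the array z enumerate
  the neighbourhoods of the y k by definition, and the Ricci-flat commutation says the rows do
  as well.  Expanding Gamma_2^psi f v along the columns and along the rows and averaging gives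
  the exact identity  Gamma_2^psi f v = 1/4 * sum_{i,k} psi_defect psi (w i k) (x i) (x k),
  each summand being nonnegative by two tangent-line inequalities of the concave psi.
  Since v is a neighbour of every y i, each row i has an entry w i (tau i) = 1 with tau a
  permutation; there the defect is psi_tilde psi (x i) (x (tau i)) >= C_psi * (a i + a (tau i))^2
  with a i = psi (x i) - psi 1, and by Cauchy-Schwarz the sum of these squares is at least
  4 / D * (sum_i a i)^2 = 4 / D * (Delta^psi f v)^2.
*)

lemma concave_on_le_tangent:
  fixes \<psi> :: "real \<Rightarrow> real"
  assumes "concave_on S \<psi>" "connected S" "s \<in> interior S" "t \<in> S"
    and "(\<psi> has_real_derivative \<psi>') (at s)"
  shows "\<psi> t \<le> \<psi> s + \<psi>' * (t - s)"
proof -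
  have "(- \<psi> t) - (- \<psi> s) \<ge> (- \<psi>') * (t - s)"
    using assms by (intro convex_on_imp_above_tangent[where A = S])
      (auto simp: concave_on_def intro: has_field_derivative_at_within DERIV_minus)
  then show ?thesis by (simp add: algebra_simps)
qed

lemma concave_C1_pos_le_tangent:
  assumes "C1_pos \<psi>" "concave_on {0<..} \<psi>" "s > 0" "t > 0"
  shows "\<psi> t \<le> \<psi> s + deriv \<psi> s * (t - s)"
  using assms
  by (intro concave_on_le_tangent[of "{0<..}"])
    (auto simp: C1_pos_def interior_open convex_connected DERIV_deriv_iff_real_differentiable)

definition psi_defect :: "(real \<Rightarrow> real) \<Rightarrow> real \<Rightarrow> real \<Rightarrow> real \<Rightarrow> real" where
  "psi_defect \<psi> w x y = (deriv \<psi> x + deriv \<psi> y) * (w - x * y)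
      + x * (\<psi> y - \<psi> (w / x)) + y * (\<psi> x - \<psi> (w / y))"

lemma psi_defect_1 [simp]: "psi_defect \<psi> 1 x y = psi_tilde \<psi> x y"
  by (simp add: psi_defect_def psi_tilde_def)

lemma psi_defect_nonneg:
  assumes tangent: "\<And>s t. s > 0 \<Longrightarrow> t > 0 \<Longrightarrow> \<psi> t \<le> \<psi> s + deriv \<psi> s * (t - s)"
    and "w > 0" "x > 0" "y > 0"
  shows "psi_defect \<psi> w x y \<ge> 0"
proof -
  have "x * \<psi> (w / x) \<le> x * (\<psi> y + deriv \<psi> y * (w / x - y))"
    using assms by (intro mult_left_mono tangent) auto
  also have "\<dots> = x * \<psi> y + deriv \<psi> y * (w - x * y)"
    using \<open>x > 0\<close> by (simp add: field_simps)
  finally have x_side: "x * \<psi> (w / x) \<le> x * \<psi> y + deriv \<psi> y * (w - x * y)" .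
  have "y * \<psi> (w / y) \<le> y * (\<psi> x + deriv \<psi> x * (w / y - x))"
    using assms by (intro mult_left_mono tangent) auto
  also have "\<dots> = y * \<psi> x + deriv \<psi> x * (w - x * y)"
    using \<open>y > 0\<close> by (simp add: field_simps)
  finally have y_side: "y * \<psi> (w / y) \<le> y * \<psi> x + deriv \<psi> x * (w - x * y)" .
  show ?thesis
    using x_side y_side by (simp add: psi_defect_def algebra_simps)
qed

lemma C_psi_le:
  assumes "x > 0" "y > 0" "\<psi> x + \<psi> y \<noteq> 2 * \<psi> 1"
  shows "C_psi \<psi> \<le> ereal (psi_tilde \<psi> x y / (\<psi> x + \<psi> y - 2 * \<psi> 1)\<^sup>2)"
  unfolding C_psi_def using assms by (intro INF_lower2[of "(x, y)"]) auto

lemma psi_tilde_ge_C_psi: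
  assumes tangent: "\<And>s t. s > 0 \<Longrightarrow> t > 0 \<Longrightarrow> \<psi> t \<le> \<psi> s + deriv \<psi> s * (t - s)"
    and "C_psi \<psi> > 0" "x > 0" "y > 0"
  shows "real_of_ereal (C_psi \<psi>) * (\<psi> x + \<psi> y - 2 * \<psi> 1)\<^sup>2 \<le> psi_tilde \<psi> x y"
proof (cases "\<psi> x + \<psi> y = 2 * \<psi> 1")
  case True
  then show ?thesis
    using psi_defect_nonneg[OF tangent, of 1 x y] assms by simp
next
  case False
  have "C_psi \<psi> \<le> ereal (psi_tilde \<psi> x y / (\<psi> x + \<psi> y - 2 * \<psi> 1)\<^sup>2)"
    using C_psi_le[OF \<open>x > 0\<close> \<open>y > 0\<close> False] .
  moreover have "(\<psi> x + \<psi> y - 2 * \<psi> 1)\<^sup>2 > 0"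
    using False by simp
  ultimately show ?thesis
    using \<open>C_psi \<psi> > 0\<close> by (cases "C_psi \<psi>") (auto simp: le_divide_eq)
qed

lemma sum_squares_perm_ge:
  fixes a :: "'i \<Rightarrow> real"
  assumes "finite I" "inj_on \<tau> I" "\<tau> ` I \<subseteq> I"
  shows "4 * (\<Sum>i\<in>I. a i)\<^sup>2 \<le> card I * (\<Sum>i\<in>I. (a i + a (\<tau> i))\<^sup>2)"
proof -
  have "\<tau> ` I = I"
    using assms by (simp add: endo_inj_surj)
  then have "(\<Sum>i\<in>I. a (\<tau> i)) = (\<Sum>i\<in>I. a i)"
    using sum.reindex[OF \<open>inj_on \<tau> I\<close>, of a] by simp
  then have "(\<Sum>i\<in>I. a i + a (\<tau> i)) = 2 * (\<Sum>i\<in>I. a i)"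
    by (simp add: sum.distrib)
  then show ?thesis
    using sum_squared_le_sum_of_squares[of "\<lambda>i. a i + a (\<tau> i)" I]
    by (simp add: power_mult_distrib mult.commute)
qed

lemma defect_sum_ge_C_psi:
  fixes x :: "'i \<Rightarrow> real" and w :: "'i \<Rightarrow> 'i \<Rightarrow> real"
  assumes "finite I"
    and tangent: "\<And>s t. s > 0 \<Longrightarrow> t > 0 \<Longrightarrow> \<psi> t \<le> \<psi> s + deriv \<psi> s * (t - s)"
    and "C_psi \<psi> > 0"
    and x_pos: "\<And>i. i \<in> I \<Longrightarrow> x i > 0"
    and w_pos: "\<And>i k. i \<in> I \<Longrightarrow> k \<in> I \<Longrightarrow> w i k > 0"
    and "inj_on \<tau> I" "\<tau> ` I \<subseteq> I" and w_\<tau>: "\<And>i. i \<in> I \<Longrightarrow> w i (\<tau> i) = 1"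
  shows "real_of_ereal (C_psi \<psi>) / card I * (\<Sum>i\<in>I. \<psi> (x i) - \<psi> 1)\<^sup>2
    \<le> (\<Sum>i\<in>I. \<Sum>k\<in>I. psi_defect \<psi> (w i k) (x i) (x k)) / 4"
proof -
  define c where "c = real_of_ereal (C_psi \<psi>)"
  define a where "a i = \<psi> (x i) - \<psi> 1" for i
  have "c \<ge> 0"
    using \<open>C_psi \<psi> > 0\<close> by (simp add: c_def real_of_ereal_pos)
  have "c / card I * (\<Sum>i\<in>I. a i)\<^sup>2 \<le> c * (\<Sum>i\<in>I. (a i + a (\<tau> i))\<^sup>2) / 4"
  proof (cases "I = {}")
    case False
    then have "card I > 0"
      using \<open>finite I\<close> by (simp add: card_gt_0_iff)
    then show ?thesis
      using mult_left_mono[OF sum_squares_perm_ge[OF assms(1,6,7), of a] \<open>c \<ge> 0\<close>]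
      by (simp add: field_simps)
  qed simp
  also have "\<dots> \<le> (\<Sum>i\<in>I. psi_tilde \<psi> (x i) (x (\<tau> i))) / 4"
    using psi_tilde_ge_C_psi[OF tangent \<open>C_psi \<psi> > 0\<close>] x_pos \<open>\<tau> ` I \<subseteq> I\<close>
    by (auto simp: c_def a_def sum_distrib_left intro!: sum_mono)
  also have "\<dots> \<le> (\<Sum>i\<in>I. \<Sum>k\<in>I. psi_defect \<psi> (w i k) (x i) (x k)) / 4"
  proof -
    have "psi_tilde \<psi> (x i) (x (\<tau> i)) \<le> (\<Sum>k\<in>I. psi_defect \<psi> (w i k) (x i) (x k))"
      if "i \<in> I" for i
      using member_le_sum[of "\<tau> i" I "\<lambda>k. psi_defect \<psi> (w i k) (x i) (x k)"]
        psi_defect_nonneg[OF tangent] x_pos w_pos w_\<tau> that \<open>\<tau> ` I \<subseteq> I\<close> \<open>finite I\<close>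
      by auto
    then show ?thesis
      by (simp add: sum_mono divide_right_mono)
  qed
  finally show ?thesis
    by (simp add: c_def a_def)
qed

lemma Gamma2_terms_column_sum:
  fixes x r s :: "'i \<Rightarrow> real" and w :: "'i \<Rightarrow> 'i \<Rightarrow> real"
  assumes x_nz: "\<And>k. k \<in> I \<Longrightarrow> x k \<noteq> 0"
    and r: "\<And>k. k \<in> I \<Longrightarrow> r k = (\<Sum>i\<in>I. (w i k - x k) / x k)"
    and s: "\<And>k. k \<in> I \<Longrightarrow> s k = (\<Sum>i\<in>I. \<psi> (w i k / x k) - \<psi> 1)"
  shows "(\<Sum>k\<in>I. deriv \<psi> (x k) * x k * (r k - (\<Sum>i\<in>I. x i - 1)))
      + (\<Sum>i\<in>I. x i - 1) * (\<Sum>i\<in>I. \<psi> (x i) - \<psi> 1)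
      - (\<Sum>k\<in>I. x k * s k - (\<Sum>i\<in>I. \<psi> (x i) - \<psi> 1))
    = (\<Sum>k\<in>I. \<Sum>i\<in>I. deriv \<psi> (x k) * (w i k - x k * x i) + x k * (\<psi> (x i) - \<psi> (w i k / x k)))"
proof -
  let ?L = "\<Sum>i\<in>I. x i - 1" and ?LP = "\<Sum>i\<in>I. \<psi> (x i) - \<psi> 1"
  have "?L * ?LP = (\<Sum>k\<in>I. (x k - 1) * ?LP)"
    by (simp add: sum_distrib_right)
  then have "(\<Sum>k\<in>I. deriv \<psi> (x k) * x k * (r k - ?L)) + ?L * ?LP - (\<Sum>k\<in>I. x k * s k - ?LP)
      = (\<Sum>k\<in>I. deriv \<psi> (x k) * x k * (r k - ?L) + x k * (?LP - s k))"
    by (simp add: algebra_simps sum.distrib sum_subtractf)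
  also have "\<dots> = (\<Sum>k\<in>I. \<Sum>i\<in>I. deriv \<psi> (x k) * (w i k - x k * x i) + x k * (\<psi> (x i) - \<psi> (w i k / x k)))"
  proof (rule sum.cong[OF refl])
    fix k assume "k \<in> I"
    have "x k * (r k - ?L) = (\<Sum>i\<in>I. x k * ((w i k - x k) / x k - (x i - 1)))"
      by (simp add: r[OF \<open>k \<in> I\<close>] sum_distrib_left sum_subtractf right_diff_distrib)
    also have "\<dots> = (\<Sum>i\<in>I. w i k - x k * x i)"
      using x_nz[OF \<open>k \<in> I\<close>] by (intro sum.cong) (simp_all add: field_simps)
    moreover have "x k * (?LP - s k) = (\<Sum>i\<in>I. x k * (\<psi> (x i) - \<psi> (w i k / x k)))"
      by (simp add: s[OF \<open>k \<in> I\<close>] sum_distrib_left sum_subtractf right_diff_distrib)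
    ultimately show "deriv \<psi> (x k) * x k * (r k - ?L) + x k * (?LP - s k)
      = (\<Sum>i\<in>I. deriv \<psi> (x k) * (w i k - x k * x i) + x k * (\<psi> (x i) - \<psi> (w i k / x k)))"
      by (simp add: sum.distrib sum_distrib_left mult.assoc)
  qed
  finally show ?thesis .
qed

lemma Gamma2_terms_eq_defect_sum:
  fixes x r s :: "'i \<Rightarrow> real" and w :: "'i \<Rightarrow> 'i \<Rightarrow> real"
  assumes x_nz: "\<And>k. k \<in> I \<Longrightarrow> x k \<noteq> 0"
    and r_col: "\<And>k. k \<in> I \<Longrightarrow> r k = (\<Sum>i\<in>I. (w i k - x k) / x k)"
    and r_row: "\<And>k. k \<in> I \<Longrightarrow> r k = (\<Sum>i\<in>I. (w k i - x k) / x k)"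
    and s_col: "\<And>k. k \<in> I \<Longrightarrow> s k = (\<Sum>i\<in>I. \<psi> (w i k / x k) - \<psi> 1)"
    and s_row: "\<And>k. k \<in> I \<Longrightarrow> s k = (\<Sum>i\<in>I. \<psi> (w k i / x k) - \<psi> 1)"
  shows "(\<Sum>k\<in>I. deriv \<psi> (x k) * x k * (r k - (\<Sum>i\<in>I. x i - 1)))
      + (\<Sum>i\<in>I. x i - 1) * (\<Sum>i\<in>I. \<psi> (x i) - \<psi> 1)
      - (\<Sum>k\<in>I. x k * s k - (\<Sum>i\<in>I. \<psi> (x i) - \<psi> 1))
    = (\<Sum>i\<in>I. \<Sum>k\<in>I. psi_defect \<psi> (w i k) (x i) (x k)) / 2" (is "?lhs = _")
proof -
  define h where "h u y z = deriv \<psi> z * (u - z * y) + z * (\<psi> y - \<psi> (u / z))" for u y z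
  have "?lhs = (\<Sum>k\<in>I. \<Sum>i\<in>I. h (w i k) (x i) (x k))"
    unfolding h_def by (rule Gamma2_terms_column_sum[OF x_nz r_col s_col])
  also have "\<dots> = (\<Sum>i\<in>I. \<Sum>k\<in>I. h (w i k) (x i) (x k))"
    by (rule sum.swap)
  finally have col: "?lhs = (\<Sum>i\<in>I. \<Sum>k\<in>I. h (w i k) (x i) (x k))" .
  have row: "?lhs = (\<Sum>i\<in>I. \<Sum>k\<in>I. h (w i k) (x k) (x i))"
    unfolding h_def by (rule Gamma2_terms_column_sum[where w = "\<lambda>i k. w k i", OF x_nz r_row s_row])
  \<comment> \<open>averaging the column and the row expansions symmetrizes the summand into \<open>psi_defect\<close>\<close>
  from col row have "?lhs = (\<Sum>i\<in>I. \<Sum>k\<in>I. (h (w i k) (x i) (x k) + h (w i k) (x k) (x i)) / 2)"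
    by (simp add: sum.distrib flip: sum_divide_distrib)
  also have "\<dots> = (\<Sum>i\<in>I. \<Sum>k\<in>I. psi_defect \<psi> (w i k) (x i) (x k)) / 2"
    by (simp add: h_def psi_defect_def sum_divide_distrib algebra_simps)
  finally show ?thesis .
qed

definition ricci_frame :: "('a \<Rightarrow> 'a \<Rightarrow> bool) \<Rightarrow> 'i set \<Rightarrow> 'a \<Rightarrow> ('i \<Rightarrow> 'a) \<Rightarrow> ('i \<Rightarrow> 'i \<Rightarrow> 'a) \<Rightarrow> bool" where
  "ricci_frame E I v y z \<longleftrightarrow> bij_betw y I {u. E v u}
     \<and> (\<forall>k\<in>I. bij_betw (\<lambda>i. z i k) I {u. E (y k) u})
     \<and> (\<forall>i\<in>I. bij_betw (\<lambda>k. z i k) I {u. E (y i) u})"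

lemma laplacian_reindex:
  assumes "bij_betw h I {w. E u w}"
  shows "laplacian E g u = (\<Sum>i\<in>I. g (h i) - g u)"
  unfolding laplacian_def using sum.reindex_bij_betw[OF assms, of "\<lambda>w. g w - g u"] by simp

lemma bij_betw_neighbours:
  assumes "fin_graph V E" "finite I" "degree E u = card I" "inj_on h I"
    and "\<And>i. i \<in> I \<Longrightarrow> E (h i) u"
  shows "bij_betw h I {w. E u w}"
proof -
  have "finite {w. E u w}"
    using assms(1) by (auto simp: fin_graph_def intro: finite_subset)
  moreover have "h ` I \<subseteq> {w. E u w}"
    using assms(1,5) by (auto simp: fin_graph_def)
  moreover have "card (h ` I) = card {w. E u w}"
    using assms(3,4) by (simp add: card_image degree_def)
  ultimately show ?thesis
    using \<open>inj_on h I\<close> by (simp add: bij_betw_def card_subset_eq)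
qed

lemma ricci_flat_frame:
  assumes G: "fin_graph V E" and "ricci_flat D V E" "v \<in> V"
  obtains y z where "ricci_frame E {1..D} v y z"
proof -
  let ?I = "{1..D}"
  note flat_at_v = bspec[OF assms(2)[unfolded ricci_flat_def] \<open>v \<in> V\<close>]
  then have deg: "\<And>u. u \<in> nbhd E v \<Longrightarrow> degree E u = D"
    by blast
  from conjunct2[OF flat_at_v] obtain \<eta> :: "nat \<Rightarrow> 'a \<Rightarrow> 'a" where
      \<eta>: "\<forall>u\<in>nbhd E v. \<forall>i\<in>?I. E (\<eta> i u) u \<and> (\<forall>j\<in>?I. i \<noteq> j \<longrightarrow> \<eta> i u \<noteq> \<eta> j u)"
    and commute: "\<forall>i\<in>?I. (\<Union>k\<in>?I. {\<eta> k (\<eta> i v)}) = (\<Union>k\<in>?I. {\<eta> i (\<eta> k v)})"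
    by (elim exE conjE)
  have edge: "\<And>u i. u \<in> nbhd E v \<Longrightarrow> i \<in> ?I \<Longrightarrow> E (\<eta> i u) u"
    and distinct: "\<And>u i j. u \<in> nbhd E v \<Longrightarrow> i \<in> ?I \<Longrightarrow> j \<in> ?I \<Longrightarrow> i \<noteq> j \<Longrightarrow> \<eta> i u \<noteq> \<eta> j u"
    using \<eta> by blast+
  have col: "bij_betw (\<lambda>i. \<eta> i u) ?I {w. E u w}" if "u \<in> nbhd E v" for u
  proof (rule bij_betw_neighbours[OF G])
    show "inj_on (\<lambda>i. \<eta> i u) ?I"
      using distinct[OF that] by (meson inj_onI)
  qed (use that deg edge in auto)
  have v_nbhd: "v \<in> nbhd E v"
    by (simp add: nbhd_def)
  have y_nbhd: "\<eta> k v \<in> nbhd E v" if "k \<in> ?I" for k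
    using edge[OF v_nbhd that] by (simp add: nbhd_def)
  have row: "bij_betw (\<lambda>k. \<eta> i (\<eta> k v)) ?I {w. E (\<eta> i v) w}" if "i \<in> ?I" for i
  proof -
    have "(\<lambda>k. \<eta> i (\<eta> k v)) ` ?I = (\<lambda>k. \<eta> k (\<eta> i v)) ` ?I"
      using bspec[OF commute that] by auto
    also have "\<dots> = {w. E (\<eta> i v) w}"
      using col[OF y_nbhd[OF that]] by (simp add: bij_betw_def)
    finally have image: "(\<lambda>k. \<eta> i (\<eta> k v)) ` ?I = {w. E (\<eta> i v) w}" .
    then have "inj_on (\<lambda>k. \<eta> i (\<eta> k v)) ?I"
      using deg[OF y_nbhd[OF that]] by (intro eq_card_imp_inj_on) (auto simp: degree_def)
    with image show ?thesis
      by (simp add: bij_betw_def)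
  qed
  have "ricci_frame E ?I v (\<lambda>k. \<eta> k v) (\<lambda>i k. \<eta> i (\<eta> k v))"
    unfolding ricci_frame_def using col[OF v_nbhd] col[OF y_nbhd] row by blast
  then show ?thesis ..
qed

lemma ricci_frame_edges:
  assumes "ricci_frame E I v y z" "i \<in> I" "k \<in> I"
  shows "E v (y k)" "E (y k) (z i k)"
  using assms bij_betwE[of y I "{u. E v u}"] bij_betwE[of "\<lambda>i. z i k" I "{u. E (y k) u}"]
  by (auto simp: ricci_frame_def)

lemma ricci_frame_return:
  assumes "fin_graph V E" "ricci_frame E I v y z"
  obtains \<tau> where "inj_on \<tau> I" "\<tau> ` I \<subseteq> I" "\<And>i. i \<in> I \<Longrightarrow> z i (\<tau> i) = v"
proof -
  have "\<exists>k. k \<in> I \<and> z i k = v" if "i \<in> I" for i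
  proof -
    have "E (y i) v"
      using ricci_frame_edges(1)[OF assms(2) that that] assms(1) by (simp add: fin_graph_def)
    moreover have "z i ` I = {u. E (y i) u}"
      using assms(2) that by (simp add: ricci_frame_def bij_betw_def)
    ultimately show ?thesis
      by (metis imageE mem_Collect_eq)
  qed
  then obtain \<tau> where \<tau>: "\<And>i. i \<in> I \<Longrightarrow> \<tau> i \<in> I \<and> z i (\<tau> i) = v"
    using bchoice[of I "\<lambda>i k. k \<in> I \<and> z i k = v"] by blast
  have "inj_on \<tau> I"
  proof (rule inj_onI)
    fix i j assume "i \<in> I" "j \<in> I" "\<tau> i = \<tau> j"
    moreover have "inj_on (\<lambda>i. z i (\<tau> j)) I"
      using assms(2) \<tau>[OF \<open>j \<in> I\<close>] by (auto simp: ricci_frame_def bij_betw_def)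
    moreover have "z i (\<tau> j) = z j (\<tau> j)"
      using \<tau> \<open>i \<in> I\<close> \<open>j \<in> I\<close> \<open>\<tau> i = \<tau> j\<close> by metis
    ultimately show "i = j"
      by (auto dest: inj_onD)
  qed
  with \<tau> show ?thesis
    using that by blast
qed

lemma lap_psi_reindex:
  assumes "bij_betw y I {u. E v u}" "f v \<noteq> 0"
  shows "lap_psi E \<psi> f v = (\<Sum>i\<in>I. \<psi> (f (y i) / f v) - \<psi> 1)"
  using assms(2) by (simp add: lap_psi_def laplacian_reindex[where E = E, OF assms(1)])

lemma Gamma2_psi_frame_eq:
  assumes frame: "ricci_frame E I v y z" and "f v > 0" and y_pos: "\<And>k. k \<in> I \<Longrightarrow> f (y k) > 0"
  shows "Gamma2_psi E \<psi> f v
    = (\<Sum>i\<in>I. \<Sum>k\<in>I. psi_defect \<psi> (f (z i k) / f v) (f (y i) / f v) (f (y k) / f v)) / 4"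
proof -
  define x where "x k = f (y k) / f v" for k
  define w where "w i k = f (z i k) / f v" for i k
  define L where "L = (\<Sum>i\<in>I. x i - 1)"
  define LP where "LP = (\<Sum>i\<in>I. \<psi> (x i) - \<psi> 1)"
  have nbrs_v: "bij_betw y I {u. E v u}"
    and col: "\<And>k. k \<in> I \<Longrightarrow> bij_betw (\<lambda>i. z i k) I {u. E (y k) u}"
    and row: "\<And>i. i \<in> I \<Longrightarrow> bij_betw (\<lambda>k. z i k) I {u. E (y i) u}"
    using frame by (auto simp: ricci_frame_def)
  have x_pos: "x k > 0" if "k \<in> I" for k
    using y_pos[OF that] \<open>f v > 0\<close> by (simp add: x_def)
  have lap_v: "laplacian E f v / f v = L"
    using \<open>f v > 0\<close>
    by (simp add: laplacian_reindex[where E = E, OF nbrs_v] L_def x_def sum_divide_distrib diff_divide_distrib)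
  have lap_psi_v: "lap_psi E \<psi> f v = LP"
    using \<open>f v > 0\<close> by (simp add: lap_psi_reindex[where E = E, OF nbrs_v] LP_def x_def)
  have ratio: "w i j / x k = f (z i j) / f (y k)"
    and diff_ratio: "(w i j - x k) / x k = (f (z i j) - f (y k)) / f (y k)" for i j k
    using \<open>f v > 0\<close> by (simp_all add: x_def w_def flip: diff_divide_distrib)
  have r_col: "laplacian E f (y k) / f (y k) = (\<Sum>i\<in>I. (w i k - x k) / x k)"
    and s_col: "lap_psi E \<psi> f (y k) = (\<Sum>i\<in>I. \<psi> (w i k / x k) - \<psi> 1)"
    if "k \<in> I" for k
    using y_pos[OF that]
    by (simp_all add: lap_psi_def laplacian_reindex[where E = E, OF col[OF that]]
        ratio diff_ratio sum_divide_distrib)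
  have r_row: "laplacian E f (y k) / f (y k) = (\<Sum>i\<in>I. (w k i - x k) / x k)"
    and s_row: "lap_psi E \<psi> f (y k) = (\<Sum>i\<in>I. \<psi> (w k i / x k) - \<psi> 1)"
    if "k \<in> I" for k
    using y_pos[OF that]
    by (simp_all add: lap_psi_def laplacian_reindex[where E = E, OF row[OF that]]
        ratio diff_ratio sum_divide_distrib)
  have omega_v: "omega_psi E \<psi> f v
      = (\<Sum>k\<in>I. deriv \<psi> (x k) * x k * (laplacian E f (y k) / f (y k) - L))"
    using lap_v by (simp add: omega_psi_def laplacian_reindex[where E = E, OF nbrs_v] x_def)
  have lap_f_lap_psi_v: "laplacian E (\<lambda>u. f u * lap_psi E \<psi> f u) v / f v
      = (\<Sum>k\<in>I. x k * lap_psi E \<psi> f (y k) - LP)"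
    using \<open>f v > 0\<close> lap_psi_v
    by (simp add: laplacian_reindex[where E = E, OF nbrs_v] x_def sum_divide_distrib field_simps)
  have total: "omega_psi E \<psi> f v + L * LP - laplacian E (\<lambda>u. f u * lap_psi E \<psi> f u) v / f v
      = (\<Sum>i\<in>I. \<Sum>k\<in>I. psi_defect \<psi> (w i k) (x i) (x k)) / 2"
    unfolding omega_v lap_f_lap_psi_v L_def LP_def
    using x_pos by (intro Gamma2_terms_eq_defect_sum[OF _ r_col r_row s_col s_row]) (metis less_irrefl)
  have Gamma2_v: "Gamma2_psi E \<psi> f v = (omega_psi E \<psi> f v + L * LP
      - laplacian E (\<lambda>u. f u * lap_psi E \<psi> f u) v / f v) / 2"
    using lap_v lap_psi_v by (simp add: Gamma2_psi_def flip: times_divide_eq_left)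
  have "Gamma2_psi E \<psi> f v = (\<Sum>i\<in>I. \<Sum>k\<in>I. psi_defect \<psi> (w i k) (x i) (x k)) / 4"
    unfolding Gamma2_v total by simp
  then show ?thesis
    by (simp only: x_def w_def)
qed

lemma Gamma2_psi_frame_ge:
  assumes G: "fin_graph V E" and frame: "ricci_frame E I v y z" and "finite I"
    and tangent: "\<And>s t. s > 0 \<Longrightarrow> t > 0 \<Longrightarrow> \<psi> t \<le> \<psi> s + deriv \<psi> s * (t - s)"
    and "C_psi \<psi> > 0" and f_pos: "\<forall>u\<in>V. f u > 0" and "v \<in> V"
  shows "real_of_ereal (C_psi \<psi>) / card I * (lap_psi E \<psi> f v)\<^sup>2 \<le> Gamma2_psi E \<psi> f v"
proof -
  obtain \<tau> where \<tau>: "inj_on \<tau> I" "\<tau> ` I \<subseteq> I" and return: "\<And>i. i \<in> I \<Longrightarrow> z i (\<tau> i) = v"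
    using ricci_frame_return[OF G frame] by blast
  have in_V: "y k \<in> V" "z i k \<in> V" if "i \<in> I" "k \<in> I" for i k
    using ricci_frame_edges[OF frame that] G unfolding fin_graph_def by blast+
  have "lap_psi E \<psi> f v = (\<Sum>i\<in>I. \<psi> (f (y i) / f v) - \<psi> 1)"
    using frame f_pos \<open>v \<in> V\<close> by (intro lap_psi_reindex) (auto simp: ricci_frame_def)
  moreover have "real_of_ereal (C_psi \<psi>) / card I * (\<Sum>i\<in>I. \<psi> (f (y i) / f v) - \<psi> 1)\<^sup>2
      \<le> (\<Sum>i\<in>I. \<Sum>k\<in>I. psi_defect \<psi> (f (z i k) / f v) (f (y i) / f v) (f (y k) / f v)) / 4"
    by (rule defect_sum_ge_C_psi[OF \<open>finite I\<close> tangent \<open>C_psi \<psi> > 0\<close> _ _ \<tau>])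
      (use f_pos \<open>v \<in> V\<close> in_V return in auto)
  moreover have "\<dots> = Gamma2_psi E \<psi> f v"
    using f_pos \<open>v \<in> V\<close> in_V by (intro Gamma2_psi_frame_eq[OF frame, symmetric]) auto
  ultimately show ?thesis
    by simp
qed

theorem mainTheorem13:
  fixes D :: nat and V :: "'a set" and E :: "'a \<Rightarrow> 'a \<Rightarrow> bool" and \<psi> :: "real \<Rightarrow> real"
  assumes "fin_graph V E"
    and "ricci_flat D V E"
    and "C1_pos \<psi>"
    and "concave_on {0<..} \<psi>"
    and "C_psi \<psi> > 0"
  shows "CD_psi V E \<psi> (real D / real_of_ereal (C_psi \<psi>))"
  unfolding CD_psi_def
proof (intro allI impI ballI)
  fix f :: "'a \<Rightarrow> real" and v
  assume "\<forall>v\<in>V. f v > 0" and "v \<in> V"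
  obtain y z where frame: "ricci_frame E {1..D} v y z"
    using ricci_flat_frame[OF assms(1,2) \<open>v \<in> V\<close>] .
  have "real_of_ereal (C_psi \<psi>) / card {1..D} * (lap_psi E \<psi> f v)\<^sup>2 \<le> Gamma2_psi E \<psi> f v"
    using concave_C1_pos_le_tangent[OF assms(3,4)] assms(5) \<open>\<forall>v\<in>V. f v > 0\<close> \<open>v \<in> V\<close>
    by (intro Gamma2_psi_frame_ge[OF assms(1) frame]) auto
  then show "1 / (real D / real_of_ereal (C_psi \<psi>)) * (lap_psi E \<psi> f v)\<^sup>2 \<le> Gamma2_psi E \<psi> f v"
    by simp
qed

end
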